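(* Let $\mathbf{H}_1,\mathbf{H}_2$ be complex Hilbert spaces with $\mathbf{H}_1$ separable, $H=\mathbf{H}_1\otimes\mathbf{H}_2$, $\mathcal{A}:H\to H$ bounded linear and $\varphi\in H$. Let $y_1,\dots,y_n\in\mathbf{H}_2$ with $\langle y_i,y_j\rangle_2=\delta_{ij}$, and let $k_1,\dots,k_n\in\mathbf{H}_2$ be linearly independent with $\langle k_i,y_j\rangle_2=\delta_{ij}$. Let $\eta_1,\dots,\eta_n\in\mathbf{H}_2$ with $\|\eta_i\|=1$ and $\langle\eta_i,y_j\rangle_2=0$ for all $i,j$, let $\varepsilon\in\mathbb{R}$, and set $k'_i=k_i+\varepsilon\eta_i$. Assume $$\|\mathcal{A}\mathcal{P}_k\|+\|\varepsilon\,\mathcal{A}\tilde{\mathcal{P}}_\eta\|<1\qquad\text{and}\qquad\tilde{\mathcal{P}}_k\sum_{i=0}^{\infty}(\mathcal{A}\mathcal{P}_k)^i\varphi=0.$$ Then $\sum_{i=0}^\infty(\mathcal{A}\mathcal{P}_{k'})^i\varphi$ converges and $\tilde{\mathcal{P}}_{k'}\sum_{i=0}^{\infty}(\mathcal{A}\mathcal{P}_{k'})^i\varphi=0$.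
   Context: $H=\mathbf{H}_1\otimes\mathbf{H}_2$ is the Hilbert tensor product with inner product $\langle\cdot,\cdot\rangle$; $\langle\cdot,\cdot\rangle_1,\langle\cdot,\cdot\rangle_2$ are the inner products of $\mathbf{H}_1,\mathbf{H}_2$ (linear in the first argument). The partial inner product $\langle\cdot,\cdot\rangle_{2'}:H\times\mathbf{H}_2\to\mathbf{H}_1$ is determined by $\langle\langle x,y\rangle_{2'},z\rangle_1=\langle x,z\otimes y\rangle$ for all $x\in H$, $y\in\mathbf{H}_2$, $z\in\mathbf{H}_1$. For $u_1,\dots,u_n\in\mathbf{H}_2$: $\mathcal{P}_u x=x-\sum_{i=1}^n\langle x,y_i\rangle_{2'}\otimes u_i$ and $\tilde{\mathcal{P}}_u x=\sum_{i=1}^n\langle x,y_i\rangle_{2'}\otimes u_i$. $\|\cdot\|$ is the operator norm. *)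

theory Defs
  imports "HOL-Analysis.Analysis"
begin

class complex_vector = real_vector +
  fixes scaleC :: "complex \<Rightarrow> 'a \<Rightarrow> 'a" (infixr "*\<^sub>C" 75)
  assumes scaleC_add_right: "a *\<^sub>C (x + y) = a *\<^sub>C x + a *\<^sub>C y"
    and scaleC_add_left: "(a + b) *\<^sub>C x = a *\<^sub>C x + b *\<^sub>C x"
    and scaleC_scaleC: "a *\<^sub>C (b *\<^sub>C x) = (a * b) *\<^sub>C x"
    and scaleC_one: "1 *\<^sub>C x = x"
    and scaleR_scaleC: "r *\<^sub>R x = complex_of_real r *\<^sub>C x"

text \<open>Inner product linear in the first argument, conjugate-linear in the second.\<close>
class complex_inner = complex_vector + real_normed_vector +
  fixes cinner :: "'a \<Rightarrow> 'a \<Rightarrow> complex"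
  assumes cinner_add_left: "cinner (x + y) z = cinner x z + cinner y z"
    and cinner_scaleC_left: "cinner (a *\<^sub>C x) y = a * cinner x y"
    and cinner_commute: "cinner x y = cnj (cinner y x)"
    and cinner_self_nonneg: "0 \<le> Re (cinner x x)"
    and cinner_self_eq_zero: "cinner x x = 0 \<longleftrightarrow> x = 0"
    and norm_eq_sqrt_cinner: "norm x = sqrt (Re (cinner x x))"

class complex_hilbert = complex_inner + complete_space

definition separable_space :: "'a::topological_space itself \<Rightarrow> bool" where
  "separable_space _ \<longleftrightarrow> (\<exists>D::'a set. countable D \<and> closure D = UNIV)"

definition cspan :: "'a::complex_vector set \<Rightarrow> 'a set" where
  "cspan S = {x. \<exists>F c. finite F \<and> F \<subseteq> S \<and> x = (\<Sum>v\<in>F. c v *\<^sub>C v)}"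

definition clinear :: "('a::complex_vector \<Rightarrow> 'b::complex_vector) \<Rightarrow> bool" where
  "clinear f \<longleftrightarrow> (\<forall>x y. f (x + y) = f x + f y) \<and> (\<forall>c x. f (c *\<^sub>C x) = c *\<^sub>C f x)"

definition cbounded_linear :: "('a::complex_inner \<Rightarrow> 'b::complex_inner) \<Rightarrow> bool" where
  "cbounded_linear f \<longleftrightarrow> clinear f \<and> (\<exists>K. \<forall>x. norm (f x) \<le> norm x * K)"

text \<open>t realises the Hilbert tensor product H = H1 \<otimes> H2: it is bilinear,
  satisfies the inner product identity on simple tensors, and the span of the simple
  tensors is dense. This characterises H1 \<otimes> H2 up to unitary isomorphism.\<close>
definition hilbert_tensor :: "('h1::complex_hilbert \<Rightarrow> 'h2::complex_hilbert \<Rightarrow> 'h::complex_hilbert) \<Rightarrow> bool" where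
  "hilbert_tensor t \<longleftrightarrow>
     (\<forall>a a' b. t (a + a') b = t a b + t a' b) \<and>
     (\<forall>a b b'. t a (b + b') = t a b + t a b') \<and>
     (\<forall>c a b. t (c *\<^sub>C a) b = c *\<^sub>C t a b) \<and>
     (\<forall>c a b. t a (c *\<^sub>C b) = c *\<^sub>C t a b) \<and>
     (\<forall>a b a' b'. cinner (t a b) (t a' b') = cinner a a' * cinner b b') \<and>
     closure (cspan (range (case_prod t))) = UNIV"

text \<open>Partial inner product: the element w of H1 with cinner w z = cinner x (z \<otimes> y) for all z.\<close>
definition pinner :: "('h1::complex_hilbert \<Rightarrow> 'h2::complex_hilbert \<Rightarrow> 'h::complex_hilbert) \<Rightarrow> 'h \<Rightarrow> 'h2 \<Rightarrow> 'h1" where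
  "pinner t x y = (THE w. \<forall>z. cinner w z = cinner x (t z y))"

definition Ptilde :: "('h1::complex_hilbert \<Rightarrow> 'h2::complex_hilbert \<Rightarrow> 'h::complex_hilbert) \<Rightarrow> nat \<Rightarrow> (nat \<Rightarrow> 'h2) \<Rightarrow> (nat \<Rightarrow> 'h2) \<Rightarrow> 'h \<Rightarrow> 'h" where
  "Ptilde t n y u x = (\<Sum>i<n. t (pinner t x (y i)) (u i))"

definition Pproj :: "('h1::complex_hilbert \<Rightarrow> 'h2::complex_hilbert \<Rightarrow> 'h::complex_hilbert) \<Rightarrow> nat \<Rightarrow> (nat \<Rightarrow> 'h2) \<Rightarrow> (nat \<Rightarrow> 'h2) \<Rightarrow> 'h \<Rightarrow> 'h" where
  "Pproj t n y u x = x - Ptilde t n y u x"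

end

theory Submission
  imports Defs
begin

text \<open>
  The sum \<open>S = \<Sum>\<^sub>i (\<A>\<P>\<^sub>k)\<^sup>i \<phi>\<close> of the Neumann series is the unique solution of
  \<open>S = \<phi> + \<A>\<P>\<^sub>k S\<close>. Testing \<open>\<tilde>\<P>\<^sub>k S = 0\<close> against the simple tensors \<open>z \<otimes> y\<^sub>j\<close> and using
  \<open>\<langle>k\<^sub>i, y\<^sub>j\<rangle>\<^sub>2 = \<delta>\<^sub>i\<^sub>j\<close> shows that every partial inner product \<open>\<langle>S, y\<^sub>j\<rangle>\<^sub>2\<^sub>'\<close> vanishes, so
  \<open>\<tilde>\<P>\<^sub>u S = 0\<close> for every family \<open>u\<close>, in particular for \<open>u = k'\<close>. Hence \<open>\<A>\<P>\<^sub>k\<^sub>' S = \<A>\<P>\<^sub>k S\<close>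
  and \<open>S\<close> also solves \<open>S = \<phi> + \<A>\<P>\<^sub>k\<^sub>' S\<close>. As \<open>\<A>\<P>\<^sub>k\<^sub>' = \<A>\<P>\<^sub>k - \<epsilon>\<A>\<tilde>\<P>\<^sub>\<eta>\<close> has operator norm
  below \<open>1\<close>, its Neumann series converges to the unique solution of that equation, which is \<open>S\<close>.
\<close>

instance complex_hilbert \<subseteq> banach ..

lemma cinner_zero_left [simp]: "cinner 0 (y::'a::complex_inner) = 0"
  using cinner_add_left[of "0::'a" 0 y] by simp

lemma cinner_add_right: "cinner (x::'a::complex_inner) (y + z) = cinner x y + cinner x z"
  using cinner_commute[of x "y + z"] cinner_commute[of y x] cinner_commute[of z x]
  by (simp add: cinner_add_left)

lemma cinner_diff_left: "cinner (x - x'::'a::complex_inner) y = cinner x y - cinner x' y"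
  using cinner_add_left[of x "- x'" y] cinner_add_left[of x' "- x'" y]
  by (simp add: eq_neg_iff_add_eq_0 add.commute)

lemma cinner_scaleC_right: "cinner (x::'a::complex_inner) (a *\<^sub>C y) = cnj a * cinner x y"
  using cinner_commute[of x "a *\<^sub>C y"] cinner_commute[of y x] by (simp add: cinner_scaleC_left)

lemma cinner_scaleR_left: "cinner (r *\<^sub>R x::'a::complex_inner) y = of_real r * cinner x y"
  by (simp add: scaleR_scaleC cinner_scaleC_left)

lemma cinner_sum_left: "cinner (\<Sum>i\<in>F. f i::'a::complex_inner) y = (\<Sum>i\<in>F. cinner (f i) y)"
  by (induction F rule: infinite_finite_induct) (auto simp: cinner_add_left)

lemma cinner_self_eq_norm_power2: "cinner (x::'a::complex_inner) x = of_real ((norm x)\<^sup>2)"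
proof -
  have "Im (cinner x x) = 0"
    using arg_cong[OF cinner_commute[of x x], of Im] by simp
  moreover have "Re (cinner x x) = (norm x)\<^sup>2"
    by (simp add: norm_eq_sqrt_cinner cinner_self_nonneg)
  ultimately show ?thesis by (simp add: complex_eq_iff)
qed

lemma norm_scaleC: "norm (a *\<^sub>C (x::'a::complex_inner)) = cmod a * norm x"
proof -
  have "cinner (a *\<^sub>C x) (a *\<^sub>C x) = of_real ((cmod a * norm x)\<^sup>2)"
    by (simp add: cinner_scaleC_left cinner_scaleC_right cinner_self_eq_norm_power2[of x]
        power_mult_distrib mult.assoc mult.commute[of "cnj a"] flip: complex_norm_square)
  then have "(norm (a *\<^sub>C x))\<^sup>2 = (cmod a * norm x)\<^sup>2"
    by (metis cinner_self_eq_norm_power2 of_real_eq_iff)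
  then show ?thesis by (rule power2_eq_imp_eq) auto
qed

lemma Re_cinner_le_norm: "Re (cinner (x::'a::complex_inner) y) \<le> norm x * norm y"
proof -
  have "cinner (x + y) (x + y) = cinner x x + cinner x y + cnj (cinner x y) + cinner y y"
    by (simp add: cinner_add_left cinner_add_right cinner_commute[of y x])
  then have "(norm (x + y))\<^sup>2 = (norm x)\<^sup>2 + 2 * Re (cinner x y) + (norm y)\<^sup>2"
    by (simp add: cinner_self_eq_norm_power2 complex_eq_iff)
  moreover have "(norm (x + y))\<^sup>2 \<le> (norm x + norm y)\<^sup>2"
    by (simp add: norm_triangle_ineq power_mono)
  ultimately show ?thesis by (simp add: power2_sum)
qed

text \<open>Rotating \<open>x\<close> by a unimodular scalar makes the inner product real and nonnegative.\<close>
lemma norm_cinner_le: "cmod (cinner (x::'a::complex_inner) y) \<le> norm x * norm y"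
proof (cases "cinner x y = 0")
  case False
  define a where "a = cnj (cinner x y) / cmod (cinner x y)"
  have "cmod a = 1" using False by (simp add: a_def norm_divide)
  have "cmod (cinner x y) = Re (cinner (a *\<^sub>C x) y)"
    using False by (simp add: a_def cinner_scaleC_left field_simps power2_eq_square flip: complex_norm_square)
  also have "\<dots> \<le> norm (a *\<^sub>C x) * norm y" by (rule Re_cinner_le_norm)
  finally show ?thesis by (simp add: norm_scaleC \<open>cmod a = 1\<close>)
qed simp

lemma tendsto_cinner_left:
  assumes "f \<longlonglongrightarrow> l"
  shows "(\<lambda>n. cinner (f n) (z::'a::complex_inner)) \<longlonglongrightarrow> cinner l z"
proof -
  have "(\<lambda>n. cinner (f n) z - cinner l z) \<longlonglongrightarrow> 0"
  proof (rule tendsto_0_le[where K = "norm z"])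
    show "(\<lambda>n. f n - l) \<longlonglongrightarrow> 0" using assms by (rule LIM_zero)
    show "\<forall>\<^sub>F n in sequentially. norm (cinner (f n) z - cinner l z) \<le> norm (f n - l) * norm z"
      using norm_cinner_le[of "f _ - l" z] by (simp add: cinner_diff_left)
  qed
  then show ?thesis by (rule LIM_zero_cancel)
qed

lemma Cauchy_if_dist_le_mult:
  assumes "Cauchy X" and dist: "\<And>m n. dist (Y m) (Y n) \<le> C * dist (X m) (X n)"
  shows "Cauchy Y"
proof (rule metric_CauchyI)
  fix e :: real assume "0 < e"
  define C' where "C' = max C 1"
  have "0 < C'" by (simp add: C'_def)
  with \<open>Cauchy X\<close> \<open>0 < e\<close> obtain M where M: "\<And>m n. M \<le> m \<Longrightarrow> M \<le> n \<Longrightarrow> dist (X m) (X n) < e / C'"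
    by (meson divide_pos_pos metric_CauchyD)
  have "dist (Y m) (Y n) < e" if "M \<le> m" "M \<le> n" for m n
  proof -
    have "dist (Y m) (Y n) \<le> C' * dist (X m) (X n)"
      using dist[of m n] by (rule order_trans) (simp add: C'_def mult_right_mono)
    also have "\<dots> < e" using M[OF that] \<open>0 < C'\<close> by (simp add: pos_less_divide_eq mult.commute)
    finally show ?thesis .
  qed
  then show "\<exists>M. \<forall>m\<ge>M. \<forall>n\<ge>M. dist (Y m) (Y n) < e" by blast
qed

lemma onorm_diff_le:
  assumes "bounded_linear f" and "bounded_linear g"
  shows "onorm (\<lambda>x. f x - g x) \<le> onorm f + onorm g"
  using onorm_triangle[OF assms(1) bounded_linear_minus[OF assms(2)]] by (simp add: onorm_neg)

definition is_pinner :: "('h1::complex_hilbert \<Rightarrow> 'h2::complex_hilbert \<Rightarrow> 'h::complex_hilbert)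
    \<Rightarrow> 'h \<Rightarrow> 'h2 \<Rightarrow> 'h1 \<Rightarrow> bool" where
  "is_pinner t x y w \<longleftrightarrow> (\<forall>z. cinner w z = cinner x (t z y))"

lemma is_pinner_unique: "is_pinner t x y w \<Longrightarrow> is_pinner t x y w' \<Longrightarrow> w = w'"
  unfolding is_pinner_def
  by (metis cinner_diff_left cinner_self_eq_zero diff_self eq_iff_diff_eq_0)

lemma is_pinner_diff: "is_pinner t x y w \<Longrightarrow> is_pinner t x' y w' \<Longrightarrow> is_pinner t (x - x') y (w - w')"
  by (simp add: is_pinner_def cinner_diff_left)

context
  fixes t :: "'h1::complex_hilbert \<Rightarrow> 'h2::complex_hilbert \<Rightarrow> 'h::complex_hilbert"
  assumes tensor: "hilbert_tensor t"
begin

lemma tensor_add_right: "t a (b + b') = t a b + t a b'"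
  using tensor unfolding hilbert_tensor_def by blast

lemma tensor_scaleR_left: "t (r *\<^sub>R a) b = r *\<^sub>R t a b"
  using tensor unfolding hilbert_tensor_def by (simp add: scaleR_scaleC)

lemma tensor_scaleR_right: "t a (r *\<^sub>R b) = r *\<^sub>R t a b"
  using tensor unfolding hilbert_tensor_def by (simp add: scaleR_scaleC)

lemma cinner_tensor: "cinner (t a b) (t a' b') = cinner a a' * cinner b b'"
  using tensor unfolding hilbert_tensor_def by blast

lemma tensor_zero_left [simp]: "t 0 b = 0"
  using tensor_scaleR_left[of 0 0 b] by simp

lemma norm_tensor: "norm (t a b) = norm a * norm b"
proof -
  have "complex_of_real ((norm (t a b))\<^sup>2) = of_real ((norm a * norm b)\<^sup>2)"
    using cinner_tensor[of a b a b]
    by (simp only: cinner_self_eq_norm_power2 power_mult_distrib of_real_mult)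
  then have "(norm (t a b))\<^sup>2 = (norm a * norm b)\<^sup>2"
    by (simp only: of_real_eq_iff)
  then show ?thesis by (rule power2_eq_imp_eq) auto
qed

lemma bounded_linear_tensor_left: "bounded_linear (\<lambda>a. t a b)"
  using tensor unfolding hilbert_tensor_def
  by (intro bounded_linear_intro[where K = "norm b"]) (auto simp: tensor_scaleR_left norm_tensor)

lemma norm_le_if_is_pinner:
  assumes "is_pinner t x y w"
  shows "norm w \<le> norm x * norm y"
proof -
  have "complex_of_real ((norm w)\<^sup>2) = cinner x (t w y)"
    using assms by (simp only: is_pinner_def flip: cinner_self_eq_norm_power2)
  from arg_cong[OF this, of Re] have "(norm w)\<^sup>2 = Re (cinner x (t w y))"
    by (simp only: Re_complex_of_real)
  also have "\<dots> \<le> norm x * norm (t w y)"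
    using complex_Re_le_cmod norm_cinner_le by (rule order_trans)
  finally have "norm w * norm w \<le> (norm x * norm y) * norm w"
    by (simp add: norm_tensor power2_eq_square mult_ac)
  then show ?thesis
    using mult_right_le_imp_le[of "norm w" "norm w" "norm x * norm y"] by (cases "w = 0") auto
qed

lemma cspan_tensors_has_pinner:
  "cspan (range (case_prod t)) \<subseteq> {x. \<exists>w. is_pinner t x y w}"
proof
  fix x assume "x \<in> cspan (range (case_prod t))"
  then obtain F c where F: "finite F" "F \<subseteq> range (case_prod t)" and x: "x = (\<Sum>v\<in>F. c v *\<^sub>C v)"
    unfolding cspan_def by blast
  from F have "\<exists>w. is_pinner t (\<Sum>v\<in>F. c v *\<^sub>C v) y w"
  proof (induction F rule: finite_induct)
    case empty
    show ?case by (rule exI[of _ 0]) (simp add: is_pinner_def)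
  next
    case (insert v F)
    then obtain w where w: "is_pinner t (\<Sum>v\<in>F. c v *\<^sub>C v) y w" by auto
    from insert obtain a b where "v = t a b" by auto
    with insert w have "is_pinner t (\<Sum>v\<in>insert v F. c v *\<^sub>C v) y ((c v * cinner b y) *\<^sub>C a + w)"
      by (simp add: is_pinner_def cinner_add_left cinner_scaleC_left cinner_tensor mult.assoc)
    then show ?case by blast
  qed
  then show "x \<in> {x. \<exists>w. is_pinner t x y w}" using x by simp
qed

text \<open>The partial inner products of a convergent sequence converge, since
  \<open>x \<mapsto> \<langle>x, y\<rangle>\<^sub>2\<^sub>'\<close> is Lipschitz with constant \<open>\<parallel>y\<parallel>\<close>.\<close>
lemma closed_has_pinner: "closed {x. \<exists>w. is_pinner t x y w}"
  unfolding closed_sequential_limits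
proof (intro allI impI, elim conjE)
  fix x :: "nat \<Rightarrow> 'h" and l
  assume "\<forall>n. x n \<in> {x. \<exists>w. is_pinner t x y w}" and lim: "x \<longlonglongrightarrow> l"
  then have "\<exists>w. \<forall>n. is_pinner t (x n) y (w n)" by (simp add: choice_iff)
  then obtain w where w: "\<And>n. is_pinner t (x n) y (w n)" by blast
  have "Cauchy w"
  proof (rule Cauchy_if_dist_le_mult)
    show "Cauchy x" using lim by (rule LIMSEQ_imp_Cauchy)
    show "dist (w m) (w n) \<le> norm y * dist (x m) (x n)" for m n
      using norm_le_if_is_pinner[OF is_pinner_diff[OF w w]] by (simp add: dist_norm mult.commute)
  qed
  then obtain W where W: "w \<longlonglongrightarrow> W" using Cauchy_convergent convergent_def by blast
  have "cinner W z = cinner l (t z y)" for z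
  proof (rule LIMSEQ_unique)
    show "(\<lambda>n. cinner (w n) z) \<longlonglongrightarrow> cinner W z" by (rule tendsto_cinner_left[OF W])
    show "(\<lambda>n. cinner (w n) z) \<longlonglongrightarrow> cinner l (t z y)"
      using tendsto_cinner_left[OF lim] w by (simp add: is_pinner_def)
  qed
  then show "l \<in> {x. \<exists>w. is_pinner t x y w}" by (auto simp: is_pinner_def)
qed

lemma is_pinner_pinner: "is_pinner t x y (pinner t x y)"
proof -
  have "x \<in> closure (cspan (range (case_prod t)))"
    using tensor by (simp add: hilbert_tensor_def)
  then obtain w where "is_pinner t x y w"
    using closure_minimal[OF cspan_tensors_has_pinner closed_has_pinner] by blast
  then show ?thesis
    unfolding pinner_def is_pinner_def[symmetric] by (blast intro: theI is_pinner_unique)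
qed

lemma cinner_pinner: "cinner (pinner t x y) z = cinner x (t z y)"
  using is_pinner_pinner by (simp add: is_pinner_def)

lemma pinner_eqI: "is_pinner t x y w \<Longrightarrow> pinner t x y = w"
  using is_pinner_pinner is_pinner_unique by blast

lemma bounded_linear_pinner: "bounded_linear (\<lambda>x. pinner t x y)"
proof (rule bounded_linear_intro[where K = "norm y"])
  show "pinner t (x + x') y = pinner t x y + pinner t x' y" for x x'
    by (rule pinner_eqI) (simp add: is_pinner_def cinner_add_left cinner_pinner)
  show "pinner t (r *\<^sub>R x) y = r *\<^sub>R pinner t x y" for r x
    by (rule pinner_eqI) (simp add: is_pinner_def cinner_scaleR_left cinner_pinner)
  show "norm (pinner t x y) \<le> norm x * norm y" for x
    by (rule norm_le_if_is_pinner[OF is_pinner_pinner])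
qed

lemma bounded_linear_Ptilde: "bounded_linear (Ptilde t n y u)"
  unfolding Ptilde_def
  by (intro bounded_linear_sum bounded_linear_compose[OF bounded_linear_tensor_left bounded_linear_pinner])

lemma bounded_linear_Pproj: "bounded_linear (Pproj t n y u)"
  unfolding Pproj_def by (intro bounded_linear_sub bounded_linear_ident bounded_linear_Ptilde)

lemma Ptilde_add_scaleR:
  "Ptilde t n y (\<lambda>j. k j + \<epsilon> *\<^sub>R \<eta> j) x = Ptilde t n y k x + \<epsilon> *\<^sub>R Ptilde t n y \<eta> x"
  by (simp add: Ptilde_def tensor_add_right tensor_scaleR_right sum.distrib scaleR_sum_right)

lemma Pproj_add_scaleR:
  "Pproj t n y (\<lambda>j. k j + \<epsilon> *\<^sub>R \<eta> j) x = Pproj t n y k x - \<epsilon> *\<^sub>R Ptilde t n y \<eta> x"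
  by (simp add: Pproj_def Ptilde_add_scaleR)

lemma onorm_Pproj_add_scaleR_le:
  assumes A: "bounded_linear A"
  shows "onorm (\<lambda>x. A (Pproj t n y (\<lambda>j. k j + \<epsilon> *\<^sub>R \<eta> j) x))
    \<le> onorm (\<lambda>x. A (Pproj t n y k x)) + onorm (\<lambda>x. \<epsilon> *\<^sub>R A (Ptilde t n y \<eta> x))"
proof -
  have "(\<lambda>x. A (Pproj t n y (\<lambda>j. k j + \<epsilon> *\<^sub>R \<eta> j) x))
      = (\<lambda>x. A (Pproj t n y k x) - \<epsilon> *\<^sub>R A (Ptilde t n y \<eta> x))"
    by (simp add: Pproj_add_scaleR linear_diff[OF bounded_linear.linear[OF A]]
        linear_scale[OF bounded_linear.linear[OF A]])
  then show ?thesis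
    by (simp only:) (intro onorm_diff_le bounded_linear_compose[OF A bounded_linear_Pproj]
        bounded_linear_compose[OF bounded_linear_scaleR_right] bounded_linear_compose[OF A bounded_linear_Ptilde])
qed

text \<open>Pairing \<open>\<tilde>\<P>\<^sub>k x\<close> with \<open>z \<otimes> y\<^sub>j\<close> picks out \<open>\<langle>\<langle>x, y\<^sub>j\<rangle>\<^sub>2\<^sub>', z\<rangle>\<^sub>1\<close>.\<close>
lemma pinner_eq_0_if_Ptilde_eq_0:
  assumes biorth: "\<forall>i<n. \<forall>j<n. cinner (k i) (y j) = (if i = j then 1 else 0)"
    and "Ptilde t n y k x = 0" and "j < n"
  shows "pinner t x (y j) = 0"
proof -
  have "cinner (pinner t x (y j)) z = 0" for z
  proof -
    have "0 = cinner (Ptilde t n y k x) (t z (y j))" using assms(2) by simp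
    also have "\<dots> = (\<Sum>i<n. cinner (pinner t x (y i)) z * cinner (k i) (y j))"
      by (simp add: Ptilde_def cinner_sum_left cinner_tensor)
    also have "\<dots> = (\<Sum>i<n. if i = j then cinner (pinner t x (y i)) z else 0)"
      using biorth \<open>j < n\<close> by (intro sum.cong) auto
    also have "\<dots> = cinner (pinner t x (y j)) z" using \<open>j < n\<close> by simp
    finally show ?thesis by simp
  qed
  then show ?thesis using cinner_self_eq_zero by blast
qed

lemma Ptilde_eq_0_if_biorthogonal:
  assumes "\<forall>i<n. \<forall>j<n. cinner (k i) (y j) = (if i = j then 1 else 0)"
    and "Ptilde t n y k x = 0"
  shows "Ptilde t n y u x = 0"
  using pinner_eq_0_if_Ptilde_eq_0[OF assms] by (simp add: Ptilde_def)

end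

lemma norm_funpow_le:
  fixes f :: "'a::real_normed_vector \<Rightarrow> 'a"
  assumes "bounded_linear f"
  shows "norm ((f ^^ i) x) \<le> onorm f ^ i * norm x"
proof (induction i)
  case (Suc i)
  have "norm ((f ^^ Suc i) x) \<le> onorm f * norm ((f ^^ i) x)"
    using onorm[OF assms, of "(f ^^ i) x"] by simp
  also have "\<dots> \<le> onorm f * (onorm f ^ i * norm x)"
    using Suc onorm_pos_le[OF assms] by (rule mult_left_mono)
  finally show ?case by (simp add: mult.assoc)
qed simp

context
  fixes f :: "'a::banach \<Rightarrow> 'a"
  assumes f: "bounded_linear f" and contraction: "onorm f < 1"
begin

lemma summable_funpow: "summable (\<lambda>i. (f ^^ i) x)"
proof (rule summable_comparison_test')
  show "summable (\<lambda>i. onorm f ^ i * norm x)"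
    using onorm_pos_le[OF f] contraction by (intro summable_mult2 summable_geometric) simp
  show "norm ((f ^^ i) x) \<le> onorm f ^ i * norm x" for i
    by (rule norm_funpow_le[OF f])
qed

lemma suminf_funpow_fixpoint: "(\<Sum>i. (f ^^ i) x) = x + f (\<Sum>i. (f ^^ i) x)"
proof -
  have "f (\<Sum>i. (f ^^ i) x) = (\<Sum>i. (f ^^ Suc i) x)"
    using bounded_linear.suminf[OF f summable_funpow] by simp
  also have "\<dots> = (\<Sum>i. (f ^^ i) x) - x"
    using suminf_split_head[OF summable_funpow] by simp
  finally show ?thesis by simp
qed

lemma fixpoint_eq_suminf_funpow:
  assumes "s = x + f s"
  shows "s = (\<Sum>i. (f ^^ i) x)"
proof -
  define d where "d = s - (\<Sum>i. (f ^^ i) x)"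
  have "f s = s - x" and "f (\<Sum>i. (f ^^ i) x) = (\<Sum>i. (f ^^ i) x) - x"
    using assms suminf_funpow_fixpoint[of x] by (metis add_diff_cancel_left')+
  then have "f d = d"
    unfolding d_def linear_diff[OF bounded_linear.linear[OF f]] by simp
  then have "norm d \<le> onorm f * norm d" using onorm[OF f, of d] by simp
  with contraction have "norm d = 0"
    by (metis mult_le_cancel_right1 norm_ge_zero not_le order_antisym)
  then show ?thesis by (simp add: d_def)
qed

end

lemma bounded_linear_if_cbounded_linear: "cbounded_linear A \<Longrightarrow> bounded_linear A"
  unfolding cbounded_linear_def clinear_def
  by (metis bounded_linear_intro scaleR_scaleC)

theorem theorem3:
  fixes t :: "'h1::complex_hilbert \<Rightarrow> 'h2::complex_hilbert \<Rightarrow> 'h::complex_hilbert"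
    and A :: "'h \<Rightarrow> 'h" and \<phi> :: 'h and n :: nat
    and y k \<eta> :: "nat \<Rightarrow> 'h2" and \<epsilon> :: real
  assumes sep: "separable_space TYPE('h1)"
    and tens: "hilbert_tensor t"
    and A: "cbounded_linear A"
    and y_on: "\<forall>i<n. \<forall>j<n. cinner (y i) (y j) = (if i = j then 1 else 0)"
    and k_indep: "\<forall>c. (\<Sum>i<n. c i *\<^sub>C k i) = 0 \<longrightarrow> (\<forall>i<n. c i = 0)"
    and k_y: "\<forall>i<n. \<forall>j<n. cinner (k i) (y j) = (if i = j then 1 else 0)"
    and eta_norm: "\<forall>i<n. norm (\<eta> i) = 1"
    and eta_y: "\<forall>i<n. \<forall>j<n. cinner (\<eta> i) (y j) = 0"
    and small: "onorm (\<lambda>x. A (Pproj t n y k x))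
                + onorm (\<lambda>x. \<epsilon> *\<^sub>R A (Ptilde t n y \<eta> x)) < 1"
    and fix0: "Ptilde t n y k (\<Sum>i. ((\<lambda>x. A (Pproj t n y k x)) ^^ i) \<phi>) = 0"
  shows "summable (\<lambda>i. ((\<lambda>x. A (Pproj t n y (\<lambda>j. k j + \<epsilon> *\<^sub>R \<eta> j) x)) ^^ i) \<phi>)
    \<and> Ptilde t n y (\<lambda>j. k j + \<epsilon> *\<^sub>R \<eta> j)
        (\<Sum>i. ((\<lambda>x. A (Pproj t n y (\<lambda>j. k j + \<epsilon> *\<^sub>R \<eta> j) x)) ^^ i) \<phi>) = 0"
proof -
  define k' where "k' = (\<lambda>j. k j + \<epsilon> *\<^sub>R \<eta> j)"
  define Q where "Q = (\<lambda>x. A (Pproj t n y k x))"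
  define Q' where "Q' = (\<lambda>x. A (Pproj t n y k' x))"
  have A_linear: "bounded_linear A" using A by (rule bounded_linear_if_cbounded_linear)
  have Q: "bounded_linear Q" and Q': "bounded_linear Q'"
    unfolding Q_def Q'_def by (rule bounded_linear_compose[OF A_linear bounded_linear_Pproj[OF tens]])+
  have "bounded_linear (\<lambda>x. \<epsilon> *\<^sub>R A (Ptilde t n y \<eta> x))"
    by (intro bounded_linear_compose[OF bounded_linear_scaleR_right]
        bounded_linear_compose[OF A_linear bounded_linear_Ptilde[OF tens]])
  then have "onorm Q < 1" using small onorm_pos_le unfolding Q_def by fastforce
  have "onorm Q' < 1"
    using onorm_Pproj_add_scaleR_le[OF tens A_linear, of n y k \<epsilon> \<eta>] small
    unfolding Q'_def k'_def by linarith
  define S where "S = (\<Sum>i. (Q ^^ i) \<phi>)"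
  have "Ptilde t n y k S = 0" using fix0 by (simp add: S_def Q_def)
  then have "Ptilde t n y k' S = 0" by (rule Ptilde_eq_0_if_biorthogonal[OF tens k_y])
  with \<open>Ptilde t n y k S = 0\<close> have "Q' S = Q S" by (simp add: Q_def Q'_def Pproj_def)
  then have "S = \<phi> + Q' S" using suminf_funpow_fixpoint[OF Q \<open>onorm Q < 1\<close>] by (simp add: S_def)
  then have "S = (\<Sum>i. (Q' ^^ i) \<phi>)" by (rule fixpoint_eq_suminf_funpow[OF Q' \<open>onorm Q' < 1\<close>])
  with \<open>Ptilde t n y k' S = 0\<close> summable_funpow[OF Q' \<open>onorm Q' < 1\<close>] show ?thesis
    by (simp add: Q'_def k'_def)
qed

end
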